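(* Under the hypotheses of the setting below (with $\mu_+(\infty)\le1$, $\mu_-(\infty)<\infty$, (A1), (A4), (A5), (A6)), let $0<\mu_0\le\mu_1$ be constants with $\mu_0\le f'\le\mu_1$ and $\mu_0\rho\le f(\rho)\le\mu_1\rho$ on $[0,\infty)$, and $\eta_0=\min\{\mu_0/\mu_1,q_0^{-1}(\mu_1/\mu_0)\}$, $\eta_1=\max\{\mu_1/\mu_0,q_1^{-1}(\mu_0/\mu_1)\}$. If $r$ is a regular equilibrium solution with $r(1)=\lambda>0$, then $$\lambda\rho^{c_1}\le r(\rho)\le\lambda\rho^{c_0}\qquad\text{for all }\rho\in(0,1],$$ where $c_0=\eta_0\mu_0/\mu_1$ and $c_1=\eta_1\mu_1/\mu_0$.
   Context: Setting: $n\ge2$; $\kappa$ continuous on $[0,\infty)$, $\kappa_\pm=\max\{\pm\kappa,0\}$, $\mu_\pm(\infty)=\int_0^\infty s\kappa_\pm(s)ds$; $f$ solves $f''+\kappa f=0$, $f(0)=0$, $f'(0)=1$. $\Phi(v_1,\dots,v_n)=\sum_i\phi(v_i)+h(v_1\cdots v_n)$, $\tau(\rho)=f(r(\rho))/f(\rho)$. An equilibrium solution with $r(1)=\lambda$ is $r\in C^1(0,1]$, twice differentiable on $(0,1)$, $r'>0$ on $(0,1]$, $r(0):=\lim_{\rho\to0^+}r(\rho)\ge0$, $r(1)=\lambda$, satisfying on $(0,1)$ $$f(\rho)\big[\phi''(r')+h''(r'\tau^{n-1})\tau^{2(n-1)}\big]r''=(n-1)\big[f'(r)\phi'(\tau)-f'(\rho)\phi'(r')\big]-(n-1)\big(f'(r)r'-f'(\rho)\tau\big)h''(r'\tau^{n-1})\,r'\tau^{2n-3};$$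 regular means $r(0)=0$. (A1) $h$ is $C^2$ and strictly convex. (A4) $\phi:(0,\infty)\to(0,\infty)$ is $C^2$ and convex. (A5) $v\phi'(v)$ is increasing. (A6) there is $t_0\ge0$ with $\phi'(t_0)=0$; $q_1(s)=\sup_{v>t_0}\phi'(v)/\phi'(sv)$ ($s\ge1$), $q_0(s)=\inf_{v>t_0/s}\phi'(v)/\phi'(sv)$ ($s\in(0,1]$) satisfy $q_1\in C^1[1,\infty)$, $q_0\in C^1(0,1]$, $q_1(s)\to0$ as $s\to\infty$, $q_0(s)\to\infty$ as $s\to0^+$, $q_1'<0$, $q_0'<0$. *)

theory Defs
  imports "HOL-Analysis.Analysis"
begin

definition strict_convex_on :: "real set \<Rightarrow> (real \<Rightarrow> real) \<Rightarrow> bool" where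
  "strict_convex_on S g \<longleftrightarrow> convex S \<and>
     (\<forall>x\<in>S. \<forall>y\<in>S. x \<noteq> y \<longrightarrow> (\<forall>t. 0 < t \<and> t < 1 \<longrightarrow>
        g ((1 - t) * x + t * y) < (1 - t) * g x + t * g y))"

definition q1_fun :: "(real \<Rightarrow> real) \<Rightarrow> real \<Rightarrow> real \<Rightarrow> real" where
  "q1_fun dphi t0 s = (SUP v\<in>{t0<..}. dphi v / dphi (s * v))"

definition q0_fun :: "(real \<Rightarrow> real) \<Rightarrow> real \<Rightarrow> real \<Rightarrow> real" where
  "q0_fun dphi t0 s = (INF v\<in>{t0 / s<..}. dphi v / dphi (s * v))"

definition tau_fun :: "(real \<Rightarrow> real) \<Rightarrow> (real \<Rightarrow> real) \<Rightarrow> real \<Rightarrow> real" where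
  "tau_fun f r \<rho> = f (r \<rho>) / f \<rho>"

text \<open>Equilibrium solution with r(1) = lam. Here df = f', dphi = phi', ddphi = phi'',
  ddh = h''; rd and rdd are the first and second derivatives of r.\<close>
definition equilibrium_solution ::
  "nat \<Rightarrow> (real \<Rightarrow> real) \<Rightarrow> (real \<Rightarrow> real) \<Rightarrow> (real \<Rightarrow> real) \<Rightarrow> (real \<Rightarrow> real)
   \<Rightarrow> (real \<Rightarrow> real) \<Rightarrow> real \<Rightarrow> (real \<Rightarrow> real) \<Rightarrow> bool" where
  "equilibrium_solution n f df dphi ddphi ddh lam r \<longleftrightarrow>
     (\<exists>rd rdd r0.
        (\<forall>\<rho>\<in>{0<..1}. (r has_real_derivative rd \<rho>) (at \<rho> within {0<..1})) \<and>
        continuous_on {0<..1} rd \<and>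
        (\<forall>\<rho>\<in>{0<..<1}. (rd has_real_derivative rdd \<rho>) (at \<rho>)) \<and>
        (\<forall>\<rho>\<in>{0<..1}. rd \<rho> > 0) \<and>
        (r \<longlongrightarrow> r0) (at_right 0) \<and> r0 \<ge> 0 \<and>
        r 1 = lam \<and>
        (\<forall>\<rho>\<in>{0<..<1}.
           let \<tau> = tau_fun f r \<rho> in
           f \<rho> * (ddphi (rd \<rho>) + ddh (rd \<rho> * \<tau> ^ (n - 1)) * \<tau> ^ (2 * (n - 1))) * rdd \<rho>
           = real (n - 1) * (df (r \<rho>) * dphi \<tau> - df \<rho> * dphi (rd \<rho>))
             - real (n - 1) * (df (r \<rho>) * rd \<rho> - df \<rho> * \<tau>)
               * ddh (rd \<rho> * \<tau> ^ (n - 1)) * rd \<rho> * \<tau> ^ (2 * n - 3)))"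

definition regular_equilibrium_solution ::
  "nat \<Rightarrow> (real \<Rightarrow> real) \<Rightarrow> (real \<Rightarrow> real) \<Rightarrow> (real \<Rightarrow> real) \<Rightarrow> (real \<Rightarrow> real)
   \<Rightarrow> (real \<Rightarrow> real) \<Rightarrow> real \<Rightarrow> (real \<Rightarrow> real) \<Rightarrow> bool" where
  "regular_equilibrium_solution n f df dphi ddphi ddh lam r \<longleftrightarrow>
     equilibrium_solution n f df dphi ddphi ddh lam r \<and> (r \<longlongrightarrow> 0) (at_right 0)"

end

theory Submission
  imports Defs
begin

text \<open>
  The proof controls the ratio \<open>r'/\<tau>\<close>, where \<open>\<tau>(\<rho>) = f(r(\<rho>))/f(\<rho>)\<close>, and shows
  \<open>\<eta>\<^sub>0 \<le> r'/\<tau> \<le> \<eta>\<^sub>1\<close> on \<open>(0, 1)\<close>. Writing \<open>X = f \<tau>'\<close> and \<open>Y\<close> for the \<open>\<phi>\<close>-part of the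
  equation, the key comparison principle says: on an interval where \<open>\<sigma> X > 0\<close> and \<open>\<sigma> Y \<le> 0\<close>
  (\<open>\<sigma> = \<plusminus>1\<close>), \<open>\<sigma> r'\<close> does not increase while \<open>\<sigma> \<tau>\<close> increases; its proof uses the convexity of
  \<open>\<phi>\<close>, hypothesis (A5) and the strict convexity of \<open>h\<close>. If \<open>r'/\<tau>\<close> exceeded \<open>\<eta>\<^sub>1\<close> somewhere, the
  growth hypothesis (A6) on \<open>\<phi>'\<close> puts us in the case \<open>\<sigma> = 1\<close> on the whole interval to the left,
  so \<open>r'\<close> decreases there, whence \<open>r \<ge> \<rho> r'\<close> (as \<open>r(0\<^sup>+) = 0\<close>) and \<open>r'/\<tau> \<le> \<mu>\<^sub>1/\<mu>\<^sub>0 \<le> \<eta>\<^sub>1\<close>,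
  a contradiction; the lower bound is symmetric. The bounds on \<open>f\<close> then turn the estimate into
  \<open>c\<^sub>0 r \<le> \<rho> r' \<le> c\<^sub>1 r\<close>, which integrates to the claimed power bounds.
\<close>

section \<open>Real-variable preliminaries\<close>

lemma convex_tangent_below:
  fixes F dF :: "real \<Rightarrow> real"
  assumes "convex_on {0<..} F" and "\<And>x. 0 < x \<Longrightarrow> (F has_real_derivative dF x) (at x)"
    and "0 < p" and "0 < q"
  shows "dF p * (q - p) \<le> F q - F p"
proof -
  have "p \<in> interior ({0<..} :: real set)" using assms(3) by (simp add: interior_open)
  then show ?thesis
    using convex_on_imp_above_tangent[OF assms(1) connected_Ioi _ _
            has_field_derivative_at_within[OF assms(2)[OF assms(3)]], of q] assms(4)
    by (simp add: mult.commute)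
qed

lemma convex_deriv_mono:
  fixes F dF :: "real \<Rightarrow> real"
  assumes cv: "convex_on {0<..} F" and der: "\<And>x. 0 < x \<Longrightarrow> (F has_real_derivative dF x) (at x)"
    and "0 < p" and "p \<le> q"
  shows "dF p \<le> dF q"
proof (cases "p = q")
  case False
  have "dF p * (q - p) \<le> F q - F p" "dF q * (p - q) \<le> F p - F q"
    using convex_tangent_below[OF cv der] assms(3,4) by auto
  then have "dF p * (q - p) \<le> dF q * (q - p)" by (simp add: algebra_simps)
  then show ?thesis using False assms(4) by simp
qed simp

lemma strict_convex_imp_convex:
  fixes F :: "real \<Rightarrow> real"
  assumes "strict_convex_on S F" shows "convex_on S F"
proof (rule convex_onI)
  fix t x y :: real assume t: "0 < t" "t < 1" and xy: "x \<in> S" "y \<in> S"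
  show "F ((1 - t) *\<^sub>R x + t *\<^sub>R y) \<le> (1 - t) * F x + t * F y"
  proof (cases "x = y")
    case True then show ?thesis by (simp add: algebra_simps flip: distrib_right)
  next
    case False
    then have "F ((1 - t) * x + t * y) < (1 - t) * F x + t * F y"
      using assms xy t unfolding strict_convex_on_def by blast
    then show ?thesis by simp
  qed
next
  show "convex S" using assms by (simp add: strict_convex_on_def)
qed

text \<open>The derivative of a strictly convex function is strictly increasing: compare the
  tangents at \<open>p\<close> and \<open>q\<close> with the strict chord inequality at the midpoint.\<close>
lemma strict_convex_deriv_strict_mono:
  fixes F dF :: "real \<Rightarrow> real"
  assumes scv: "strict_convex_on {0<..} F"
    and der: "\<And>x. 0 < x \<Longrightarrow> (F has_real_derivative dF x) (at x)"
    and pq: "0 < p" "p < q"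
  shows "dF p < dF q"
proof -
  define m where "m = (1 - 1/2) * p + (1/2) * q"
  have m: "0 < m" "m - p = (q - p) / 2" "m - q = - ((q - p) / 2)"
    using pq by (auto simp: m_def field_simps)
  have chord: "\<forall>t. 0 < t \<and> t < 1 \<longrightarrow> F ((1 - t) * p + t * q) < (1 - t) * F p + t * F q"
    using scv pq unfolding strict_convex_on_def by auto
  have "F m < F p / 2 + F q / 2"
    using chord[rule_format, of "1/2"] unfolding m_def by simp
  moreover have "dF p * (m - p) \<le> F m - F p" "dF q * (m - q) \<le> F m - F q"
    using convex_tangent_below[OF strict_convex_imp_convex[OF scv] der] pq m(1) by auto
  then have "dF p * ((q - p) / 2) \<le> F m - F p" "F q - F m \<le> dF q * ((q - p) / 2)"
    unfolding m(2,3) by simp_all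
  ultimately have "dF p * ((q - p) / 2) < dF q * ((q - p) / 2)" by linarith
  then show ?thesis using pq by simp
qed

lemma deriv_nonneg_if_mono:
  fixes F :: "real \<Rightarrow> real"
  assumes mono: "\<And>p q. 0 < p \<Longrightarrow> p \<le> q \<Longrightarrow> F p \<le> F q"
    and "0 < x" and der: "(F has_real_derivative d) (at x)"
  shows "0 \<le> d"
proof (rule ccontr)
  assume "\<not> 0 \<le> d"
  then obtain e where e: "0 < e" "\<forall>h>0. h < e \<longrightarrow> F (x + h) < F x"
    using DERIV_neg_dec_right[OF der] by force
  then have "F (x + e/2) < F x" by auto
  then show False using mono[of x "x + e/2"] \<open>0 < x\<close> e(1) by simp
qed

lemma deriv_within_interior:
  fixes F :: "real \<Rightarrow> real"
  assumes "(F has_real_derivative d) (at x within S)" and "x \<in> interior S"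
  shows "(F has_real_derivative d) (at x)"
  using assms by (simp only: at_within_interior)

lemma neg_deriv_within_imp_decreasing:
  fixes q d :: "real \<Rightarrow> real"
  assumes der: "\<forall>s\<in>S. (q has_real_derivative d s) (at s within S) \<and> d s < 0"
    and ab: "a < b" "{a..b} \<subseteq> S"
  shows "q b < q a"
proof (rule DERIV_neg_imp_decreasing_open[OF ab(1)])
  fix x assume x: "a < x" "x < b"
  have "{a<..<b} \<subseteq> S" using ab(2) by auto
  moreover have "x \<in> interior {a<..<b}" using x by simp
  ultimately have int: "x \<in> interior S" using interior_mono by blast
  then have "(q has_real_derivative d x) (at x within S) \<and> d x < 0"
    using der interior_subset by blast
  then show "\<exists>y. (q has_real_derivative y) (at x) \<and> y < 0"
    using deriv_within_interior[OF _ int] by blast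
next
  show "continuous_on {a..b} q"
    using DERIV_continuous_on[of S q d] der ab(2) continuous_on_subset by blast
qed

lemma last_crossing:
  fixes S :: "real \<Rightarrow> real"
  assumes cont: "continuous_on {x..y} S" and "x \<le> y" and "S x \<le> c" and "c < S y"
  obtains z where "x \<le> z" "z < y" "S z \<le> c" "\<And>w. z < w \<Longrightarrow> w \<le> y \<Longrightarrow> c < S w"
proof -
  define T where "T = {x..y} \<inter> S -` {..c}"
  have "closed T" unfolding T_def by (intro continuous_closed_preimage cont) auto
  moreover have "x \<in> T" and bdd: "bdd_above T" using assms by (auto simp: T_def)
  ultimately have zT: "Sup T \<in> T" using closed_contains_Sup by blast
  have above: "c < S w" if w: "Sup T < w" "w \<le> y" for w
  proof (rule ccontr)
    assume "\<not> c < S w"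
    then have "w \<in> T" using w zT by (auto simp: T_def)
    then have "w \<le> Sup T" using bdd by (rule cSup_upper)
    then show False using w by simp
  qed
  have "Sup T \<noteq> y" using zT assms(4) by (auto simp: T_def)
  then show ?thesis using zT above by (intro that[of "Sup T"]) (auto simp: T_def)
qed

lemma lower_bound_from_origin:
  fixes r r' :: "real \<Rightarrow> real"
  assumes lim: "(r \<longlongrightarrow> 0) (at_right 0)" and "0 < \<rho>" and cont: "continuous_on {0<..\<rho>} r"
    and der: "\<And>y. 0 < y \<Longrightarrow> y < \<rho> \<Longrightarrow> (r has_real_derivative r' y) (at y)"
    and bound: "\<And>y. 0 < y \<Longrightarrow> y < \<rho> \<Longrightarrow> c \<le> r' y"
  shows "\<rho> * c \<le> r \<rho>"
proof -
  have "r e - e * c \<le> r \<rho> - \<rho> * c" if e: "0 < e" "e < \<rho>" for e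
  proof (rule DERIV_nonneg_imp_increasing_open[of e \<rho> "\<lambda>x. r x - x * c"])
    fix y assume y: "e < y" "y < \<rho>"
    have "((\<lambda>x. r x - x * c) has_real_derivative r' y - 1 * c) (at y)"
      using y e by (intro DERIV_diff der DERIV_cmult_right DERIV_ident) auto
    then show "\<exists>d. ((\<lambda>x. r x - x * c) has_real_derivative d) (at y) \<and> 0 \<le> d"
      using bound[of y] y e by auto
  next
    show "continuous_on {e..\<rho>} (\<lambda>x. r x - x * c)" using e
      by (intro continuous_intros continuous_on_subset[OF cont]) auto
  qed (use e in simp)
  moreover have "\<forall>\<^sub>F e in at_right 0. e \<in> {0<..<\<rho>}"
    using \<open>0 < \<rho>\<close> by (intro eventually_at_right_real)
  ultimately have "\<forall>\<^sub>F e in at_right 0. r e - e * c \<le> r \<rho> - \<rho> * c"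
    by (auto elim!: eventually_mono)
  moreover have "((\<lambda>e. r e - e * c) \<longlongrightarrow> 0 - 0 * c) (at_right 0)"
    by (intro tendsto_intros lim tendsto_ident_at)
  ultimately have "0 \<le> r \<rho> - \<rho> * c"
    by (intro tendsto_upperbound[of "\<lambda>e. r e - e * c" 0]) auto
  then show ?thesis by simp
qed

lemma upper_bound_from_origin:
  fixes r r' :: "real \<Rightarrow> real"
  assumes lim: "(r \<longlongrightarrow> 0) (at_right 0)" and "0 < \<rho>" and cont: "continuous_on {0<..\<rho>} r"
    and der: "\<And>y. 0 < y \<Longrightarrow> y < \<rho> \<Longrightarrow> (r has_real_derivative r' y) (at y)"
    and bound: "\<And>y. 0 < y \<Longrightarrow> y < \<rho> \<Longrightarrow> r' y \<le> c"
  shows "r \<rho> \<le> \<rho> * c"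
proof -
  have "\<rho> * (- c) \<le> - r \<rho>"
  proof (rule lower_bound_from_origin[where r' = "\<lambda>y. - r' y"])
    show "((\<lambda>y. - r y) \<longlongrightarrow> 0) (at_right 0)" using tendsto_minus[OF lim] by simp
    show "continuous_on {0<..\<rho>} (\<lambda>y. - r y)" by (intro continuous_intros cont)
  qed (use assms in \<open>auto intro: DERIV_minus\<close>)
  then show ?thesis by simp
qed

lemma ln_quotient_power_deriv:
  fixes r :: "real \<Rightarrow> real"
  assumes "0 < y" "0 < r y" "(r has_real_derivative r' y) (at y)"
  shows "((\<lambda>y. ln (r y) - c * ln y) has_real_derivative r' y / r y - c / y) (at y)"
proof -
  have "((\<lambda>x. ln (r x)) has_real_derivative 1 / r y * r' y) (at y)"
    using assms by (intro DERIV_chain2[OF DERIV_ln_divide]) auto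
  moreover have "((\<lambda>x. c * ln x) has_real_derivative c * (1 / y)) (at y)"
    using assms by (intro DERIV_cmult DERIV_ln_divide)
  ultimately show ?thesis by (auto dest: DERIV_diff)
qed

lemma powr_bounds_from_log_derivative:
  fixes r r' :: "real \<Rightarrow> real"
  assumes x: "0 < x" "x \<le> 1" and cont: "continuous_on {x..1} r"
    and pos: "\<And>y. x \<le> y \<Longrightarrow> y \<le> 1 \<Longrightarrow> 0 < r y"
    and der: "\<And>y. x < y \<Longrightarrow> y < 1 \<Longrightarrow> (r has_real_derivative r' y) (at y)"
    and bounds: "\<And>y. x < y \<Longrightarrow> y < 1 \<Longrightarrow> c0 * r y \<le> y * r' y \<and> y * r' y \<le> c1 * r y"
  shows "r 1 * x powr c1 \<le> r x \<and> r x \<le> r 1 * x powr c0"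
proof -
  define \<psi> where "\<psi> c y = ln (r y) - c * ln y" for c y
  have cont_\<psi>: "continuous_on {x..1} (\<psi> c)" for c
    unfolding \<psi>_def using x pos by (intro continuous_intros cont) force+
  have der_\<psi>: "(\<psi> c has_real_derivative r' y / r y - c / y) (at y)" if "x < y" "y < 1" for c y
    unfolding \<psi>_def[abs_def] using that x pos der by (intro ln_quotient_power_deriv) auto
  have "\<psi> c0 x \<le> \<psi> c0 1"
  proof (rule DERIV_nonneg_imp_increasing_open[OF x(2) _ cont_\<psi>])
    fix y assume y: "x < y" "y < 1"
    have "c0 / y \<le> r' y / r y" using bounds[OF y] pos[of y] y x by (simp add: field_simps)
    then show "\<exists>d. (\<psi> c0 has_real_derivative d) (at y) \<and> 0 \<le> d" using der_\<psi>[OF y] by force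
  qed
  moreover have "\<psi> c1 1 \<le> \<psi> c1 x"
  proof (rule DERIV_nonpos_imp_decreasing_open[OF x(2) _ cont_\<psi>])
    fix y assume y: "x < y" "y < 1"
    have "r' y / r y \<le> c1 / y" using bounds[OF y] pos[of y] y x by (simp add: field_simps)
    then show "\<exists>d. (\<psi> c1 has_real_derivative d) (at y) \<and> d \<le> 0" using der_\<psi>[OF y] by force
  qed
  moreover have "ln (r 1 * x powr c) = ln (r 1) + c * ln x" for c
    using pos[of 1] x by (simp add: ln_mult ln_powr)
  moreover have "0 < r 1 * x powr c" "0 < r x" for c using pos[of 1] pos[of x] x by auto
  ultimately show ?thesis unfolding \<psi>_def by (simp flip: ln_le_cancel_iff)
qed

section \<open>Consequences of (A4)--(A6) for \<open>\<phi>\<close>\<close>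

text \<open>The properties of \<open>\<phi>'\<close> used in the argument: \<open>\<phi>'\<close> is nondecreasing (convexity of \<open>\<phi>\<close>),
  \<open>v \<phi>'(v)\<close> is nondecreasing (A5), and (A6) with the ratio functions \<open>q\<^sub>0\<close>, \<open>q\<^sub>1\<close> strictly
  decreasing and continuous (as follows from their negative derivatives).\<close>
locale phi_growth =
  fixes dphi :: "real \<Rightarrow> real" and t0 :: real
  assumes dphi_mono: "\<And>p q. 0 < p \<Longrightarrow> p \<le> q \<Longrightarrow> dphi p \<le> dphi q"
    and A5: "\<And>p q. 0 < p \<Longrightarrow> p \<le> q \<Longrightarrow> p * dphi p \<le> q * dphi q"
    and t0_nonneg: "0 \<le> t0"
    and dphi_t0: "(t0 > 0 \<and> dphi t0 = 0) \<or> (t0 = 0 \<and> (dphi \<longlongrightarrow> 0) (at_right 0))"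
    and q0_decreasing: "\<And>a b. 0 < a \<Longrightarrow> a < b \<Longrightarrow> b \<le> 1 \<Longrightarrow> q0_fun dphi t0 b < q0_fun dphi t0 a"
    and q1_decreasing: "\<And>a b. 1 \<le> a \<Longrightarrow> a < b \<Longrightarrow> q1_fun dphi t0 b < q1_fun dphi t0 a"
    and q0_cont: "continuous_on {0<..1} (q0_fun dphi t0)"
    and q1_cont: "continuous_on {1..} (q1_fun dphi t0)"
    and q0_lim: "filterlim (q0_fun dphi t0) at_top (at_right 0)"
    and q1_lim: "(q1_fun dphi t0 \<longlongrightarrow> 0) at_top"
begin

abbreviation q0 :: "real \<Rightarrow> real" where "q0 \<equiv> q0_fun dphi t0"
abbreviation q1 :: "real \<Rightarrow> real" where "q1 \<equiv> q1_fun dphi t0"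

lemma dphi_nonneg: assumes "t0 < v" shows "0 \<le> dphi v"
  using dphi_t0
proof
  assume "0 < t0 \<and> dphi t0 = 0"
  then show ?thesis using dphi_mono[of t0 v] assms by auto
next
  assume t0: "t0 = 0 \<and> (dphi \<longlongrightarrow> 0) (at_right 0)"
  have "\<forall>\<^sub>F w in at_right 0. w \<in> {0<..<v}" using assms t0 by (intro eventually_at_right_real) auto
  then have "\<forall>\<^sub>F w in at_right 0. dphi w \<le> dphi v"
    by (rule eventually_mono) (auto intro: dphi_mono)
  then show ?thesis using t0 by (intro tendsto_upperbound[of dphi 0]) auto
qed

lemma dphi_nonpos: assumes "0 < v" "v \<le> t0" shows "dphi v \<le> 0"
proof -
  have "dphi t0 = 0" using dphi_t0 assms by auto
  then show ?thesis using dphi_mono[of v t0] assms by simp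
qed

text \<open>The ratios \<open>\<phi>'(v) / \<phi>'(s v)\<close> defining \<open>q\<^sub>0\<close> and \<open>q\<^sub>1\<close> lie in \<open>[0, \<infinity>)\<close>, resp. \<open>(-\<infinity>, 1]\<close>,
  so the infimum and supremum are attained as bounds.\<close>
lemma q0_le_ratio:
  assumes s: "0 < s" "s \<le> 1" and v: "t0 / s < v"
  shows "q0 s \<le> dphi v / dphi (s * v)"
  unfolding q0_fun_def
proof (rule cINF_lower[OF _ greaterThan_iff[THEN iffD2, OF v]], rule bdd_belowI[of _ 0])
  fix y assume "y \<in> (\<lambda>v. dphi v / dphi (s * v)) ` {t0 / s<..}"
  then obtain w where w: "t0 / s < w" "y = dphi w / dphi (s * w)" by auto
  have "t0 \<le> t0 / s" using s t0_nonneg by (simp add: le_divide_eq mult_left_le)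
  moreover have "t0 < s * w" using w s by (simp add: divide_less_eq mult.commute)
  ultimately show "0 \<le> y" using w dphi_nonneg by simp
qed

lemma ratio_le_q1:
  assumes s: "1 \<le> s" and v: "t0 < v"
  shows "dphi v / dphi (s * v) \<le> q1 s"
  unfolding q1_fun_def
proof (rule cSUP_upper[OF greaterThan_iff[THEN iffD2, OF v]], rule bdd_aboveI[of _ 1])
  fix y assume "y \<in> (\<lambda>v. dphi v / dphi (s * v)) ` {t0<..}"
  then obtain w where w: "t0 < w" "y = dphi w / dphi (s * w)" by auto
  have "0 < w" using w t0_nonneg by simp
  then have "dphi w \<le> dphi (s * w)" using dphi_mono s by simp
  moreover have "0 \<le> dphi w" using w dphi_nonneg by simp
  ultimately show "y \<le> 1" using w by (cases "dphi (s * w) = 0") (auto simp: divide_le_eq_1)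
qed

text \<open>\<open>\<phi>'\<close> is strictly positive beyond \<open>t\<^sub>0\<close>: a zero at \<open>v > t\<^sub>0\<close> would make \<open>\<phi>'\<close> vanish on
  \<open>[t\<^sub>0, v]\<close> and force \<open>q\<^sub>0(s) \<le> 0 \<le> q\<^sub>0(1)\<close> for some \<open>s < 1\<close>, contradicting that \<open>q\<^sub>0\<close> decreases.\<close>
lemma dphi_pos: assumes v: "t0 < v" shows "0 < dphi v"
proof (rule ccontr)
  assume "\<not> ?thesis"
  then have z: "dphi v = 0" using dphi_nonneg[OF v] by simp
  have vp: "0 < v" using v t0_nonneg by simp
  define s where "s = (1 + t0 / v) / 2"
  have "0 \<le> t0 / v" "t0 / v < 1" using v vp t0_nonneg by auto
  then have s: "0 < s" "s < 1" by (auto simp: s_def)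
  have sv: "s * v = (v + t0) / 2" using vp by (simp add: s_def field_simps)
  have svb: "0 < s * v" "t0 < s * v" "s * v \<le> v" unfolding sv using v vp t0_nonneg by auto
  then have "dphi (s * v) = 0" using dphi_mono[OF svb(1,3)] dphi_nonneg[OF svb(2)] z by simp
  then have "q0 s \<le> 0"
    using q0_le_ratio[of s v] s sv v by (simp add: divide_less_eq mult.commute)
  moreover have "0 \<le> q0 1"
    unfolding q0_fun_def by (rule cINF_greatest) (use dphi_nonneg in auto)
  moreover have "q0 1 < q0 s" using s by (intro q0_decreasing) auto
  ultimately show False by simp
qed

lemma q1_one: "q1 1 = 1"
proof (rule antisym)
  show "q1 1 \<le> 1" unfolding q1_fun_def
    by (rule cSUP_least) (auto simp: divide_le_eq_1 dest: dphi_nonneg)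
  show "1 \<le> q1 1" using ratio_le_q1[of 1 "t0 + 1"] dphi_pos[of "t0 + 1"] by simp
qed

lemma q0_one_le: "q0 1 \<le> 1"
  using q0_le_ratio[of 1 "t0 + 1"] dphi_pos[of "t0 + 1"] by simp

text \<open>Beyond \<open>t\<^sub>0\<close> the function \<open>\<phi>'\<close> is strictly increasing, since \<open>q\<^sub>1(s) < q\<^sub>1(1) = 1\<close> for \<open>s > 1\<close>.\<close>
lemma dphi_strict_mono:
  assumes "t0 \<le> p" "0 < p" "p < q" shows "dphi p < dphi q"
proof (cases "p = t0")
  case True
  then show ?thesis using dphi_t0 dphi_pos[of q] assms by auto
next
  case False
  then have pt: "t0 < p" using assms by simp
  have "dphi p / dphi ((q / p) * p) < 1"
    using ratio_le_q1[OF _ pt, of "q / p"] q1_decreasing[of 1 "q / p"] q1_one assms by simp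
  then show ?thesis using dphi_pos[of q] assms pt by (simp add: divide_less_eq)
qed

text \<open>Combined with (A5), a flat piece of \<open>\<phi>'\<close> can only occur at the value \<open>0\<close>.\<close>
lemma dphi_flat_imp_zero:
  assumes pq: "0 < p" "p < q" and eq: "dphi p = dphi q"
  shows "dphi p = 0"
proof -
  have "\<not> t0 \<le> p" using dphi_strict_mono[of p q] eq pq by auto
  then have "dphi p \<le> 0" using dphi_nonpos[of p] pq by auto
  moreover have "p * dphi p \<le> q * dphi p" using A5[of p q] eq pq by simp
  then have "0 \<le> (q - p) * dphi p" by (simp add: algebra_simps)
  then have "0 \<le> dphi p" using pq by (simp add: zero_le_mult_iff)
  ultimately show ?thesis by simp
qed

text \<open>The inverses used to define \<open>\<eta>\<^sub>0, \<eta>\<^sub>1\<close> exist: \<open>q\<^sub>1\<close> decreases continuously from \<open>1\<close> to \<open>0\<close>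
  and \<open>q\<^sub>0\<close> from \<open>\<infinity>\<close> to \<open>q\<^sub>0(1) \<le> 1\<close>.\<close>
lemma q1_inverse:
  assumes c: "0 < c" "c \<le> 1"
  shows "1 \<le> the_inv_into {1..} q1 c \<and> q1 (the_inv_into {1..} q1 c) = c"
proof -
  have "\<forall>\<^sub>F s in at_top. q1 s < c" using q1_lim c by (intro order_tendstoD(2))
  then obtain b where b: "\<And>s. b \<le> s \<Longrightarrow> q1 s < c" unfolding eventually_at_top_linorder by auto
  have "q1 (max b 1) \<le> c" "c \<le> q1 1" using b[of "max b 1"] q1_one c by auto
  then obtain x where x: "1 \<le> x" "q1 x = c"
    using IVT2'[of q1 "max b 1" c 1] continuous_on_subset[OF q1_cont] by force
  have "inj_on q1 {1..}"
    by (intro linorder_inj_onI') (metis atLeast_iff order_less_irrefl q1_decreasing)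
  then show ?thesis using the_inv_into_f_f[of q1 "{1..}" x] x by simp
qed

lemma q0_inverse:
  assumes C: "1 \<le> C"
  shows "0 < the_inv_into {0<..1} q0 C \<and> the_inv_into {0<..1} q0 C \<le> 1
           \<and> q0 (the_inv_into {0<..1} q0 C) = C"
proof -
  have "\<forall>\<^sub>F s in at_right 0. C \<le> q0 s" using q0_lim unfolding filterlim_at_top by auto
  then obtain b where b: "b > 0" "\<And>y. 0 < y \<Longrightarrow> y < b \<Longrightarrow> C \<le> q0 y"
    unfolding eventually_at_right_field by auto
  define a where "a = min (b/2) (1/2)"
  have a: "0 < a" "a < b" "a \<le> 1" using b by (auto simp: a_def)
  have "C \<le> q0 a" "q0 1 \<le> C" using b a q0_one_le C by auto
  then obtain x where x: "a \<le> x" "x \<le> 1" "q0 x = C"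
    using IVT2'[of q0 1 C a] continuous_on_subset[OF q0_cont, of "{a..1}"] a by force
  have "inj_on q0 {0<..1}"
    by (intro linorder_inj_onI') (metis greaterThanAtMost_iff order_less_irrefl q0_decreasing)
  then show ?thesis using the_inv_into_f_f[of q0 "{0<..1}" x] x a by simp
qed

lemma q1_ratio_bound:
  assumes c: "0 < c" "c \<le> 1" and s: "the_inv_into {1..} q1 c < s" and v: "t0 < v"
  shows "dphi v < c * dphi (s * v)"
proof -
  define x where "x = the_inv_into {1..} q1 c"
  have x: "1 \<le> x" "q1 x = c" using q1_inverse[OF c] by (simp_all add: x_def)
  have "t0 < s * v" using v s x t0_nonneg unfolding x_def[symmetric]
    by (smt (verit) mult_le_cancel_right1)
  then have pos: "0 < dphi (s * v)" by (rule dphi_pos)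
  have "dphi v / dphi (s * v) \<le> q1 s" using ratio_le_q1[OF _ v] s x by (simp add: x_def)
  also have "\<dots> < c" using q1_decreasing[of x s] s x by (simp add: x_def)
  finally show ?thesis using pos by (simp add: divide_less_eq)
qed

lemma q0_ratio_bound:
  assumes C: "1 \<le> C" and s: "0 < s" "s < the_inv_into {0<..1} q0 C" and v: "t0 / s < v"
  shows "C * dphi (s * v) < dphi v"
proof -
  define x where "x = the_inv_into {0<..1} q0 C"
  have x: "x \<le> 1" "q0 x = C" using q0_inverse[OF C] by (simp_all add: x_def)
  have "t0 < s * v" using s v by (simp add: divide_less_eq mult.commute)
  then have pos: "0 < dphi (s * v)" by (rule dphi_pos)
  have "C < q0 s" using q0_decreasing[of s x] s x by (simp add: x_def)
  also have "q0 s \<le> dphi v / dphi (s * v)" using q0_le_ratio[OF s(1) _ v] s x by (simp add: x_def)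
  finally show ?thesis using pos by (simp add: less_divide_eq)
qed

end

section \<open>Equilibrium solutions with bounded \<open>f\<close>\<close>

text \<open>An equilibrium solution \<open>r\<close> with \<open>r(0\<^sup>+) = 0\<close>, \<open>r(1) = \<lambda>\<close>, derivatives \<open>rd = r'\<close>, \<open>rdd = r''\<close>,
  for \<open>f\<close> with \<open>\<mu>\<^sub>0 \<le> f' \<le> \<mu>\<^sub>1\<close> and \<open>\<mu>\<^sub>0 \<rho> \<le> f(\<rho>) \<le> \<mu>\<^sub>1 \<rho>\<close>; of \<open>\<phi>\<close> and \<open>h\<close> only the facts
  \<open>\<phi>'' \<ge> 0\<close>, \<open>h'' \<ge> 0\<close> and \<open>h'\<close> strictly increasing are needed besides \<open>phi_growth\<close>.\<close>
locale bounded_equilibrium = phi_growth dphi t0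
  for dphi :: "real \<Rightarrow> real" and t0 :: real +
  fixes n :: nat and f df ddphi dh ddh r rd rdd :: "real \<Rightarrow> real" and \<mu>0 \<mu>1 lam :: real
  assumes n2: "2 \<le> n"
    and mu0_pos: "0 < \<mu>0" and mu01: "\<mu>0 \<le> \<mu>1"
    and df_bounds: "\<And>x. 0 \<le> x \<Longrightarrow> \<mu>0 \<le> df x \<and> df x \<le> \<mu>1"
    and f_bounds: "\<And>x. 0 \<le> x \<Longrightarrow> \<mu>0 * x \<le> f x \<and> f x \<le> \<mu>1 * x"
    and f_deriv: "\<And>x. 0 < x \<Longrightarrow> (f has_real_derivative df x) (at x)"
    and r_deriv: "\<And>x. 0 < x \<Longrightarrow> x < 1 \<Longrightarrow> (r has_real_derivative rd x) (at x)"
    and r_cont: "continuous_on {0<..1} r"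
    and rd_cont: "continuous_on {0<..1} rd"
    and rd_deriv: "\<And>x. 0 < x \<Longrightarrow> x < 1 \<Longrightarrow> (rd has_real_derivative rdd x) (at x)"
    and rd_pos: "\<And>x. 0 < x \<Longrightarrow> x \<le> 1 \<Longrightarrow> 0 < rd x"
    and r_lim: "(r \<longlongrightarrow> 0) (at_right 0)"
    and r_one: "r 1 = lam"
    and ode: "\<And>\<rho>. 0 < \<rho> \<Longrightarrow> \<rho> < 1 \<Longrightarrow>
           f \<rho> * (ddphi (rd \<rho>) + ddh (rd \<rho> * tau_fun f r \<rho> ^ (n - 1)) * tau_fun f r \<rho> ^ (2 * (n - 1))) * rdd \<rho>
           = real (n - 1) * (df (r \<rho>) * dphi (tau_fun f r \<rho>) - df \<rho> * dphi (rd \<rho>))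
             - real (n - 1) * (df (r \<rho>) * rd \<rho> - df \<rho> * tau_fun f r \<rho>)
               * ddh (rd \<rho> * tau_fun f r \<rho> ^ (n - 1)) * rd \<rho> * tau_fun f r \<rho> ^ (2 * n - 3)"
    and dphi_deriv: "\<And>v. 0 < v \<Longrightarrow> (dphi has_real_derivative ddphi v) (at v)"
    and ddphi_nonneg: "\<And>v. 0 < v \<Longrightarrow> 0 \<le> ddphi v"
    and dh_deriv: "\<And>x. 0 < x \<Longrightarrow> (dh has_real_derivative ddh x) (at x)"
    and ddh_nonneg: "\<And>x. 0 < x \<Longrightarrow> 0 \<le> ddh x"
    and dh_strict_mono: "\<And>p q. 0 < p \<Longrightarrow> p < q \<Longrightarrow> dh p < dh q"
begin

abbreviation tau :: "real \<Rightarrow> real" where "tau \<equiv> tau_fun f r"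

text \<open>\<open>X = f \<tau>'\<close>; \<open>Y\<close> is the \<open>\<phi>\<close>-part of the right-hand side of the equation; \<open>G\<close> is the argument
  of \<open>h''\<close>, with derivative \<open>G'\<close>; \<open>ratio = r' / \<tau>\<close> is the quantity the argument controls.\<close>
definition X :: "real \<Rightarrow> real" where "X \<rho> = df (r \<rho>) * rd \<rho> - df \<rho> * tau \<rho>"
definition Y :: "real \<Rightarrow> real" where "Y \<rho> = df (r \<rho>) * dphi (tau \<rho>) - df \<rho> * dphi (rd \<rho>)"
definition G :: "real \<Rightarrow> real" where "G \<rho> = rd \<rho> * tau \<rho> ^ (n - 1)"
definition G' :: "real \<Rightarrow> real" where
  "G' \<rho> = rd \<rho> * (real (n - 1) * (X \<rho> / f \<rho> * tau \<rho> ^ (n - 1 - Suc 0))) + rdd \<rho> * tau \<rho> ^ (n - 1)"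
definition ratio :: "real \<Rightarrow> real" where "ratio \<rho> = rd \<rho> / tau \<rho>"

definition \<eta>0 :: real where "\<eta>0 = min (\<mu>0 / \<mu>1) (the_inv_into {0<..1} q0 (\<mu>1 / \<mu>0))"
definition \<eta>1 :: real where "\<eta>1 = max (\<mu>1 / \<mu>0) (the_inv_into {1..} q1 (\<mu>0 / \<mu>1))"

lemma mu1_pos: "0 < \<mu>1" using mu0_pos mu01 by linarith

lemma eta0: "0 < \<eta>0" "\<eta>0 \<le> \<mu>0 / \<mu>1"
  using q0_inverse[of "\<mu>1 / \<mu>0"] mu0_pos mu1_pos mu01 by (auto simp: \<eta>0_def)

lemma eta1: "\<mu>1 / \<mu>0 \<le> \<eta>1" by (simp add: \<eta>1_def)

lemma dphi_growth_above:
  assumes "\<eta>1 < s" "t0 < v" shows "dphi v < (\<mu>0 / \<mu>1) * dphi (s * v)"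
  using q1_ratio_bound[of "\<mu>0 / \<mu>1" s v] assms mu0_pos mu1_pos mu01 by (simp add: \<eta>1_def)

lemma dphi_growth_below:
  assumes "0 < s" "s < \<eta>0" "t0 / s < v" shows "(\<mu>1 / \<mu>0) * dphi (s * v) < dphi v"
  using q0_ratio_bound[of "\<mu>1 / \<mu>0" s v] assms mu0_pos mu1_pos mu01 by (simp add: \<eta>0_def)

lemma f_pos: "0 < x \<Longrightarrow> 0 < f x"
  using f_bounds[of x] mu0_pos by (smt (verit) mult_pos_pos)

lemma f_cont: "continuous_on {0<..} f"
  by (rule continuous_at_imp_continuous_on) (auto intro: DERIV_isCont f_deriv)

lemma r_strict_mono: "0 < a \<Longrightarrow> a < b \<Longrightarrow> b \<le> 1 \<Longrightarrow> r a < r b"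
  by (rule DERIV_pos_imp_increasing_open[of a b r])
     (auto intro!: r_deriv rd_pos continuous_on_subset[OF r_cont] exI[of _ "rd _"])

text \<open>Regularity \<open>r(0\<^sup>+) = 0\<close> and monotonicity make \<open>r\<close> positive.\<close>
lemma r_pos: assumes "0 < x" "x \<le> 1" shows "0 < r x"
proof -
  have "\<forall>\<^sub>F y in at_right 0. r y \<le> r (x/2)"
  proof (rule eventually_mono)
    show "\<forall>\<^sub>F y in at_right 0. y \<in> {0<..<x/2}" using assms by (intro eventually_at_right_real) auto
  qed (use assms in \<open>auto intro!: less_imp_le r_strict_mono\<close>)
  then have "0 \<le> r (x/2)" by (intro tendsto_upperbound[OF r_lim]) auto
  also have "\<dots> < r x" using assms by (intro r_strict_mono) auto
  finally show ?thesis .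
qed

lemma tau_pos: "0 < x \<Longrightarrow> x \<le> 1 \<Longrightarrow> 0 < tau x"
  by (simp add: tau_fun_def f_pos r_pos)

lemma tau_lower: assumes "0 < x" "x \<le> 1" shows "\<mu>0 * r x / (\<mu>1 * x) \<le> tau x"
proof -
  have "\<mu>0 * r x / (\<mu>1 * x) \<le> f (r x) / (\<mu>1 * x)"
    using f_bounds[of "r x"] r_pos[OF assms] assms mu1_pos by (intro divide_right_mono) auto
  also have "\<dots> \<le> f (r x) / f x"
    using f_bounds[of "r x"] f_bounds[of x] r_pos[OF assms] assms f_pos[of x] f_pos[of "r x"]
    by (intro divide_left_mono) auto
  finally show ?thesis by (simp add: tau_fun_def)
qed

lemma tau_upper: assumes "0 < x" "x \<le> 1" shows "tau x \<le> \<mu>1 * r x / (\<mu>0 * x)"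
proof -
  have "f (r x) / f x \<le> f (r x) / (\<mu>0 * x)"
    using f_bounds[of "r x"] f_bounds[of x] r_pos[OF assms] assms mu0_pos f_pos[of x] f_pos[of "r x"]
    by (intro divide_left_mono) auto
  also have "\<dots> \<le> \<mu>1 * r x / (\<mu>0 * x)"
    using f_bounds[of "r x"] r_pos[OF assms] assms mu0_pos by (intro divide_right_mono) auto
  finally show ?thesis by (simp add: tau_fun_def)
qed

lemma tau_cont: "continuous_on {0<..1} tau"
proof -
  have "continuous_on {0<..1} (\<lambda>x. f (r x))"
    by (rule continuous_on_compose2[OF f_cont r_cont]) (auto intro: r_pos)
  moreover have "continuous_on {0<..1} f" by (rule continuous_on_subset[OF f_cont]) auto
  ultimately show ?thesis unfolding tau_fun_def[abs_def] using f_pos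
    by (intro continuous_on_divide) force+
qed

lemma tau_deriv: assumes "0 < x" "x < 1" shows "(tau has_real_derivative X x / f x) (at x)"
proof -
  have "((\<lambda>x. f (r x) / f x) has_real_derivative
     (df (r x) * rd x * f x - f (r x) * df x) / (f x * f x)) (at x)"
    using assms f_pos[of x] r_pos[of x]
    by (intro DERIV_divide DERIV_chain2[OF f_deriv] r_deriv f_deriv) auto
  moreover have "(df (r x) * rd x * f x - f (r x) * df x) / (f x * f x) = X x / f x"
    using f_pos[of x] assms by (simp add: X_def tau_fun_def field_simps)
  ultimately show ?thesis unfolding tau_fun_def[abs_def] by simp
qed

lemma G_pos: "0 < x \<Longrightarrow> x \<le> 1 \<Longrightarrow> 0 < G x"
  by (simp add: G_def rd_pos tau_pos)

lemma G_deriv: "0 < x \<Longrightarrow> x < 1 \<Longrightarrow> (G has_real_derivative G' x) (at x)"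
  unfolding G_def[abs_def] G'_def by (intro DERIV_mult' DERIV_power tau_deriv rd_deriv)

lemma dphi_rd_deriv: "0 < x \<Longrightarrow> x < 1 \<Longrightarrow>
    ((\<lambda>x. dphi (rd x)) has_real_derivative ddphi (rd x) * rdd x) (at x)"
  by (intro DERIV_chain2[OF dphi_deriv] rd_deriv rd_pos) auto

lemma dphi_rd_cont: "continuous_on {0<..1} (\<lambda>x. dphi (rd x))"
proof (rule continuous_on_compose2[OF _ rd_cont])
  show "continuous_on {0<..} dphi"
    by (rule continuous_at_imp_continuous_on) (auto intro: DERIV_isCont dphi_deriv)
qed (auto intro: rd_pos)

lemma G_cont: "continuous_on {0<..1} G"
  unfolding G_def[abs_def] by (intro continuous_on_mult continuous_on_power rd_cont tau_cont)

lemma dh_G_cont: "continuous_on {0<..1} (\<lambda>x. dh (G x))"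
proof (rule continuous_on_compose2[OF _ G_cont])
  show "continuous_on {0<..} dh"
    by (rule continuous_at_imp_continuous_on) (auto intro: DERIV_isCont dh_deriv)
qed (auto intro: G_pos)

lemma ratio_cont: "continuous_on {0<..1} ratio"
  unfolding ratio_def[abs_def] using tau_pos by (intro continuous_on_divide rd_cont tau_cont) force+

lemma ode_XYG:
  assumes "0 < x" "x < 1"
  shows "f x * (ddphi (rd x) + ddh (G x) * tau x ^ (2 * (n - 1))) * rdd x
       = real (n - 1) * Y x - real (n - 1) * X x * ddh (G x) * rd x * tau x ^ (2 * n - 3)"
  using ode[OF assms] by (simp add: X_def Y_def G_def)

text \<open>Where \<open>\<sigma> X > 0\<close>, the function \<open>\<sigma> \<tau>\<close> is strictly increasing, as \<open>\<tau>' = X / f\<close>.\<close>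
lemma sigma_tau_increasing:
  assumes "0 < u" "u < v" "v \<le> 1" and X: "\<And>x. u < x \<Longrightarrow> x < v \<Longrightarrow> 0 < \<sigma> * X x"
  shows "\<sigma> * tau u < \<sigma> * tau v"
proof (rule DERIV_pos_imp_increasing_open[of u v "\<lambda>x. \<sigma> * tau x"])
  fix x assume x: "u < x" "x < v"
  have "((\<lambda>x. \<sigma> * tau x) has_real_derivative \<sigma> * X x / f x) (at x)"
    using DERIV_cmult[OF tau_deriv, of x \<sigma>] x assms by simp
  moreover have "0 < \<sigma> * X x / f x" using X[OF x] f_pos[of x] x assms by simp
  ultimately show "\<exists>y. ((\<lambda>x. \<sigma> * tau x) has_real_derivative y) (at x) \<and> 0 < y" by blast
next
  show "continuous_on {u..v} (\<lambda>x. \<sigma> * tau x)" using assms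
    by (intro continuous_on_mult continuous_on_const continuous_on_subset[OF tau_cont]) auto
qed (use assms in simp)

text \<open>Where \<open>\<sigma> X > 0\<close> and \<open>\<sigma> Y \<le> 0\<close>, the right-hand side of the equation has the sign of \<open>-\<sigma>\<close>
  while the coefficient of \<open>r''\<close> is nonnegative; hence \<open>\<sigma> (\<phi>'(r'))' \<le> 0\<close>.\<close>
lemma sigma_dphi_rd_deriv_nonpos:
  assumes x: "0 < x" "x < 1" and sg: "0 < \<sigma> * X x" "\<sigma> * Y x \<le> 0"
  shows "\<sigma> * (ddphi (rd x) * rdd x) \<le> 0"
proof (cases "ddphi (rd x) = 0")
  case False
  define A where "A = f x * (ddphi (rd x) + ddh (G x) * tau x ^ (2 * (n - 1)))"
  have tp: "0 < tau x" and gp: "0 < G x" and dp: "0 < ddphi (rd x)"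
    using x False ddphi_nonneg[of "rd x"] rd_pos[of x] by (auto intro: tau_pos G_pos)
  have "0 < A" unfolding A_def
    using dp ddh_nonneg[OF gp] tp f_pos[of x] x by (intro mult_pos_pos add_pos_nonneg) auto
  have "0 \<le> real (n - 1) * (\<sigma> * X x) * ddh (G x) * rd x * tau x ^ (2 * n - 3)"
    using sg ddh_nonneg[OF gp] rd_pos[of x] x tp by simp
  moreover have "real (n - 1) * (\<sigma> * Y x) \<le> 0" using sg by (simp add: mult_nonneg_nonpos)
  ultimately have "A * (\<sigma> * rdd x) \<le> 0"
    using arg_cong[OF ode_XYG[OF x], of "\<lambda>t. \<sigma> * t"] unfolding A_def by (simp add: algebra_simps)
  then have "\<sigma> * rdd x \<le> 0" using \<open>0 < A\<close> by (simp add: mult_le_0_iff)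
  moreover have "\<sigma> * (ddphi (rd x) * rdd x) = ddphi (rd x) * (\<sigma> * rdd x)" by (simp only: mult_ac)
  ultimately show ?thesis using dp mult_nonneg_nonpos[of "ddphi (rd x)" "\<sigma> * rdd x"] by linarith
qed simp

lemma sigma_dphi_rd_antitone:
  assumes uv: "0 < u" "u \<le> a" "a \<le> b" "b \<le> v" "v \<le> 1"
    and sg: "\<And>x. u < x \<Longrightarrow> x < v \<Longrightarrow> 0 < \<sigma> * X x \<and> \<sigma> * Y x \<le> 0"
  shows "\<sigma> * dphi (rd b) \<le> \<sigma> * dphi (rd a)"
proof (rule DERIV_nonpos_imp_decreasing_open[of a b "\<lambda>x. \<sigma> * dphi (rd x)"])
  fix x assume x: "a < x" "x < b"
  then have "((\<lambda>x. \<sigma> * dphi (rd x)) has_real_derivative \<sigma> * (ddphi (rd x) * rdd x)) (at x)"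
    using uv by (intro DERIV_cmult dphi_rd_deriv) auto
  then show "\<exists>y. ((\<lambda>x. \<sigma> * dphi (rd x)) has_real_derivative y) (at x) \<and> y \<le> 0"
    using sigma_dphi_rd_deriv_nonpos[of x \<sigma>] sg[of x] x uv by auto
next
  show "continuous_on {a..b} (\<lambda>x. \<sigma> * dphi (rd x))" using uv
    by (intro continuous_on_mult continuous_on_const continuous_on_subset[OF dphi_rd_cont]) auto
qed (use uv in simp)

lemma dh_G_deriv_identity:
  assumes x: "0 < x" "x < 1" and flat: "ddphi (rd x) * rdd x = 0"
  shows "f x * tau x ^ (n - 1) * (ddh (G x) * G' x) = real (n - 1) * Y x"
proof -
  have "2 * (n - 1) = (n - 1) + (n - 1)" "2 * n - 3 = (n - 1) + (n - 1 - Suc 0)" using n2 by auto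
  then have pw: "tau x ^ (2 * (n - 1)) = tau x ^ (n - 1) * tau x ^ (n - 1)"
    "tau x ^ (2 * n - 3) = tau x ^ (n - 1) * tau x ^ (n - 1 - Suc 0)"
    by (simp_all only: power_add)
  have "f x * tau x ^ (n - 1) * (ddh (G x) * G' x)
      = f x * ddh (G x) * tau x ^ (2 * (n - 1)) * rdd x
        + real (n - 1) * X x * ddh (G x) * rd x * tau x ^ (2 * n - 3)"
    using f_pos[of x] x unfolding G'_def pw by (simp add: field_simps)
  also have "\<dots> = f x * (ddphi (rd x) + ddh (G x) * tau x ^ (2 * (n - 1))) * rdd x
        + real (n - 1) * X x * ddh (G x) * rd x * tau x ^ (2 * n - 3)"
    using flat by (simp add: algebra_simps)
  finally have "f x * tau x ^ (n - 1) * (ddh (G x) * G' x)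
      = f x * (ddphi (rd x) + ddh (G x) * tau x ^ (2 * (n - 1))) * rdd x
        + real (n - 1) * X x * ddh (G x) * rd x * tau x ^ (2 * n - 3)" .
  then show ?thesis using ode_XYG[OF x] by simp
qed

lemma sigma_dh_G_antitone:
  assumes uv: "0 < u" "u < v" "v \<le> 1"
    and sg: "\<And>x. u < x \<Longrightarrow> x < v \<Longrightarrow> \<sigma> * Y x \<le> 0 \<and> ddphi (rd x) * rdd x = 0"
  shows "\<sigma> * dh (G v) \<le> \<sigma> * dh (G u)"
proof (rule DERIV_nonpos_imp_decreasing_open[of u v "\<lambda>x. \<sigma> * dh (G x)"])
  fix x assume x: "u < x" "x < v"
  then have "((\<lambda>x. \<sigma> * dh (G x)) has_real_derivative \<sigma> * (ddh (G x) * G' x)) (at x)"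
    using uv by (intro DERIV_cmult DERIV_chain2[OF dh_deriv] G_deriv G_pos) auto
  moreover have "\<sigma> * (ddh (G x) * G' x) \<le> 0"
  proof -
    have pos: "0 < f x * tau x ^ (n - 1)" using x uv f_pos tau_pos by simp
    have "f x * tau x ^ (n - 1) * (\<sigma> * (ddh (G x) * G' x)) = real (n - 1) * (\<sigma> * Y x)"
      using dh_G_deriv_identity[of x] sg[OF x] x uv by (simp add: algebra_simps)
    also have "\<dots> \<le> 0" using sg[OF x] by (simp add: mult_nonneg_nonpos)
    finally show ?thesis using pos by (meson mult_pos_pos not_le)
  qed
  ultimately show "\<exists>y. ((\<lambda>x. \<sigma> * dh (G x)) has_real_derivative y) (at x) \<and> y \<le> 0" by blast
next
  show "continuous_on {u..v} (\<lambda>x. \<sigma> * dh (G x))" using uv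
    by (intro continuous_on_mult continuous_on_const continuous_on_subset[OF dh_G_cont]) auto
qed (use uv in simp)

text \<open>If \<open>\<sigma> r'\<close> increased across \<open>[u, v]\<close>, then \<open>\<sigma> \<phi>'(r')\<close> would both increase and decrease there,
  so \<open>\<phi>'\<close> would be flat on the range of \<open>r'\<close>, which by (A5) forces \<open>\<phi>'(r') = 0\<close> throughout.\<close>
lemma dphi_rd_vanishes:
  assumes sig: "\<sigma> = 1 \<or> \<sigma> = -1" and uv: "0 < u" "u < v" "v \<le> 1"
    and sg: "\<And>x. u < x \<Longrightarrow> x < v \<Longrightarrow> 0 < \<sigma> * X x \<and> \<sigma> * Y x \<le> 0"
    and up: "\<sigma> * rd u < \<sigma> * rd v" and w: "u \<le> w" "w \<le> v"
  shows "dphi (rd w) = 0"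
proof -
  have anti: "\<sigma> * dphi (rd b) \<le> \<sigma> * dphi (rd a)" if "u \<le> a" "a \<le> b" "b \<le> v" for a b
    using sigma_dphi_rd_antitone[of u a b v \<sigma>] that uv sg by auto
  have pos: "0 < rd u" "0 < rd v" using uv rd_pos by auto
  have ends: "dphi (rd u) = 0 \<and> dphi (rd v) = 0" using sig
  proof
    assume "\<sigma> = 1"
    then have "rd u < rd v" "dphi (rd v) \<le> dphi (rd u)" using up anti[of u v] uv by auto
    then show ?thesis using dphi_mono[of "rd u" "rd v"] dphi_flat_imp_zero[of "rd u" "rd v"] pos by auto
  next
    assume "\<sigma> = -1"
    then have "rd v < rd u" "dphi (rd u) \<le> dphi (rd v)" using up anti[of u v] uv by auto
    then show ?thesis using dphi_mono[of "rd v" "rd u"] dphi_flat_imp_zero[of "rd v" "rd u"] pos by auto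
  qed
  have "\<sigma> * dphi (rd w) = 0" using anti[of u w] anti[of w v] w ends by auto
  then show ?thesis using sig by auto
qed

text \<open>The comparison principle: on an interval where \<open>\<sigma> X > 0\<close> and \<open>\<sigma> Y \<le> 0\<close>, \<open>\<sigma> r'\<close> does not
  increase (while \<open>\<sigma> \<tau>\<close> does). Otherwise \<open>\<phi>'(r') \<equiv> 0\<close> and \<open>\<sigma> h'(G)\<close> would decrease, although
  \<open>G = r' \<tau>\<^sup>n\<^sup>-\<^sup>1\<close> moves in the direction \<open>\<sigma>\<close>, contradicting the strict convexity of \<open>h\<close>.\<close>
lemma sigma_rd_antitone:
  assumes sig: "\<sigma> = 1 \<or> \<sigma> = -1" and uv: "0 < u" "u < v" "v \<le> 1"
    and sg: "\<And>x. u < x \<Longrightarrow> x < v \<Longrightarrow> 0 < \<sigma> * X x \<and> \<sigma> * Y x \<le> 0"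
  shows "\<sigma> * rd v \<le> \<sigma> * rd u"
proof (rule ccontr)
  assume "\<not> ?thesis"
  then have up: "\<sigma> * rd u < \<sigma> * rd v" by simp
  have flat: "ddphi (rd x) * rdd x = 0" if x: "u < x" "x < v" for x
  proof (rule DERIV_local_const[OF dphi_rd_deriv])
    show "0 < min (x - u) (v - x)" using x by simp
    show "\<forall>y. \<bar>x - y\<bar> < min (x - u) (v - x) \<longrightarrow> dphi (rd x) = dphi (rd y)"
      using dphi_rd_vanishes[OF sig uv sg up] x by auto
  qed (use x uv in auto)
  have "\<sigma> * dh (G v) \<le> \<sigma> * dh (G u)"
    using sigma_dh_G_antitone[OF uv] sg flat by auto
  moreover have "\<sigma> * tau u < \<sigma> * tau v" using sigma_tau_increasing[OF uv] sg by auto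
  moreover have "0 < tau u" "0 < tau v" "0 < rd u" "0 < rd v" "0 < G u" "0 < G v"
    using uv by (auto intro: tau_pos rd_pos G_pos)
  moreover have "1 \<le> n - 1" using n2 by simp
  ultimately show False using sig up dh_strict_mono[of "G u" "G v"] dh_strict_mono[of "G v" "G u"]
    mult_strict_mono[OF _ power_strict_mono[of "tau u" "tau v" "n - 1"], of "rd u" "rd v"]
    mult_strict_mono[OF _ power_strict_mono[of "tau v" "tau u" "n - 1"], of "rd v" "rd u"]
    unfolding G_def by auto
qed

lemma sigma_ratio_decreasing:
  assumes sig: "\<sigma> = 1 \<or> \<sigma> = -1" and uv: "0 < u" "u < v" "v \<le> 1"
    and sg: "\<And>x. u < x \<Longrightarrow> x < v \<Longrightarrow> 0 < \<sigma> * X x \<and> \<sigma> * Y x \<le> 0"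
  shows "\<sigma> * ratio v < \<sigma> * ratio u"
proof -
  have rd: "\<sigma> * rd v \<le> \<sigma> * rd u" by (rule sigma_rd_antitone[OF sig uv sg])
  have tau: "\<sigma> * tau u < \<sigma> * tau v" using sigma_tau_increasing[OF uv] sg by auto
  have pos: "0 < tau u" "0 < rd u" "0 < tau v" using uv by (auto intro: tau_pos rd_pos)
  show ?thesis using sig
  proof
    assume "\<sigma> = 1"
    then have "rd v / tau v \<le> rd u / tau v" "rd u / tau v < rd u / tau u"
      using rd tau pos by (auto intro: divide_right_mono divide_strict_left_mono)
    then show ?thesis using \<open>\<sigma> = 1\<close> by (simp add: ratio_def)
  next
    assume "\<sigma> = -1"
    then have "rd u / tau u < rd u / tau v" "rd u / tau v \<le> rd v / tau v"
      using rd tau pos by (auto intro: divide_right_mono divide_strict_left_mono)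
    then show ?thesis using \<open>\<sigma> = -1\<close> by (simp add: ratio_def)
  qed
qed

text \<open>Below \<open>t\<^sub>0\<close> the sign of \<open>Y\<close> is read off from this identity and (A5).\<close>
lemma Y_rd_identity:
  "Y x * rd x = dphi (tau x) * X x + df x * (tau x * dphi (tau x) - rd x * dphi (rd x))"
  by (simp add: X_def Y_def algebra_simps)

text \<open>The sign of \<open>X\<close> only uses the bounds on \<open>f'\<close>;
  that of \<open>Y\<close> uses the growth of \<open>\<phi>'\<close> from (A6) above \<open>t\<^sub>0\<close> and (A5) below.\<close>
lemma X_pos_if_ratio_large:
  assumes x: "0 < x" "x < 1" and large: "\<mu>1 / \<mu>0 < ratio x"
  shows "0 < X x"
proof -
  have tp: "0 < tau x" and dp: "0 < rd x" and rp: "0 < r x" using x by (auto intro: tau_pos rd_pos r_pos)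
  have "\<mu>1 * tau x < \<mu>0 * rd x" using large tp mu0_pos by (simp add: ratio_def field_simps)
  moreover have "\<mu>0 * rd x \<le> df (r x) * rd x" using df_bounds[of "r x"] rp dp by simp
  moreover have "df x * tau x \<le> \<mu>1 * tau x" using df_bounds[of x] x tp by simp
  ultimately show ?thesis by (simp add: X_def)
qed

lemma Y_nonpos_if_ratio_large:
  assumes x: "0 < x" "x < 1" and large: "\<eta>1 < ratio x"
  shows "Y x \<le> 0"
proof -
  have tp: "0 < tau x" and dp: "0 < rd x" and rp: "0 < r x" using x by (auto intro: tau_pos rd_pos r_pos)
  have dfr: "\<mu>0 \<le> df (r x)" "df (r x) \<le> \<mu>1" and dfx: "\<mu>0 \<le> df x" "df x \<le> \<mu>1"
    using df_bounds[of "r x"] df_bounds[of x] rp x by auto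
  have "1 \<le> \<eta>1" using mu0_pos mu01 eta1 by (smt (verit) le_divide_eq_1_pos)
  then have "tau x * 1 \<le> tau x * \<eta>1" using tp by (intro mult_left_mono) auto
  moreover have "tau x * \<eta>1 < rd x" using large tp by (simp add: ratio_def field_simps)
  ultimately have "tau x < rd x" by simp
  show ?thesis
  proof (cases "t0 < tau x")
    case True
    have "dphi (tau x) < (\<mu>0 / \<mu>1) * dphi (rd x)"
      using dphi_growth_above[OF large True] tp by (simp add: ratio_def)
    moreover have pos: "0 < dphi (tau x)" "0 < dphi (rd x)" using True \<open>tau x < rd x\<close> dphi_pos by auto
    ultimately have "\<mu>1 * dphi (tau x) < \<mu>0 * dphi (rd x)" using mu1_pos by (simp add: field_simps)
    moreover have "df (r x) * dphi (tau x) \<le> \<mu>1 * dphi (tau x)" using dfr pos by simp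
    moreover have "\<mu>0 * dphi (rd x) \<le> df x * dphi (rd x)" using dfx pos by simp
    ultimately show ?thesis by (simp add: Y_def)
  next
    case False
    then have "dphi (tau x) \<le> 0" using dphi_nonpos tp by auto
    then have "dphi (tau x) * X x \<le> 0"
      using X_pos_if_ratio_large[OF x] large eta1 by (simp add: mult_nonpos_nonneg)
    moreover have "df x * (tau x * dphi (tau x) - rd x * dphi (rd x)) \<le> 0"
      using A5[of "tau x" "rd x"] tp \<open>tau x < rd x\<close> dfx mu0_pos by (simp add: mult_nonneg_nonpos)
    ultimately have "Y x * rd x \<le> 0" using Y_rd_identity[of x] by linarith
    then show ?thesis using dp by (simp add: mult_le_0_iff)
  qed
qed

lemma X_neg_if_ratio_small:
  assumes x: "0 < x" "x < 1" and small: "ratio x < \<mu>0 / \<mu>1"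
  shows "X x < 0"
proof -
  have tp: "0 < tau x" and dp: "0 < rd x" and rp: "0 < r x" using x by (auto intro: tau_pos rd_pos r_pos)
  have "\<mu>1 * rd x < \<mu>0 * tau x" using small tp mu1_pos by (simp add: ratio_def field_simps)
  moreover have "df (r x) * rd x \<le> \<mu>1 * rd x" using df_bounds[of "r x"] rp dp by simp
  moreover have "\<mu>0 * tau x \<le> df x * tau x" using df_bounds[of x] x tp by simp
  ultimately show ?thesis by (simp add: X_def)
qed

lemma Y_nonneg_if_ratio_small:
  assumes x: "0 < x" "x < 1" and small: "ratio x < \<eta>0"
  shows "0 \<le> Y x"
proof -
  have tp: "0 < tau x" and dp: "0 < rd x" and rp: "0 < r x" using x by (auto intro: tau_pos rd_pos r_pos)
  have dfr: "\<mu>0 \<le> df (r x)" "df (r x) \<le> \<mu>1" and dfx: "\<mu>0 \<le> df x" "df x \<le> \<mu>1"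
    using df_bounds[of "r x"] df_bounds[of x] rp x by auto
  have "\<eta>0 \<le> 1" using mu0_pos mu01 eta0 by (smt (verit) divide_le_eq_1_pos)
  then have "tau x * \<eta>0 \<le> tau x * 1" using tp by (intro mult_left_mono) auto
  moreover have "rd x < tau x * \<eta>0" using small tp by (simp add: ratio_def field_simps)
  ultimately have "rd x < tau x" by simp
  show ?thesis
  proof (cases "t0 < rd x")
    case True
    have "(\<mu>1 / \<mu>0) * dphi (ratio x * tau x) < dphi (tau x)"
      by (rule dphi_growth_below[OF _ small]) (use True tp dp in \<open>simp_all add: ratio_def field_simps\<close>)
    then have "(\<mu>1 / \<mu>0) * dphi (rd x) < dphi (tau x)" using tp by (simp add: ratio_def)
    moreover have pos: "0 < dphi (tau x)" "0 < dphi (rd x)" using True \<open>rd x < tau x\<close> dphi_pos by auto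
    ultimately have "\<mu>1 * dphi (rd x) < \<mu>0 * dphi (tau x)" using mu0_pos by (simp add: field_simps)
    moreover have "df x * dphi (rd x) \<le> \<mu>1 * dphi (rd x)" using dfx pos by simp
    moreover have "\<mu>0 * dphi (tau x) \<le> df (r x) * dphi (tau x)" using dfr pos by simp
    ultimately show ?thesis by (simp add: Y_def)
  next
    case False
    then have "dphi (rd x) \<le> 0" using dphi_nonpos dp by auto
    show ?thesis
    proof (cases "0 \<le> dphi (tau x)")
      case True
      have "df x * dphi (rd x) \<le> 0" "0 \<le> df (r x) * dphi (tau x)"
        using True \<open>dphi (rd x) \<le> 0\<close> dfr dfx mu0_pos by (simp_all add: mult_nonneg_nonpos)
      then show ?thesis by (simp add: Y_def)
    next
      case False
      have "0 \<le> dphi (tau x) * X x"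
        using False X_neg_if_ratio_small[OF x] small eta0 by (simp add: mult_nonpos_nonpos)
      moreover have "0 \<le> df x * (tau x * dphi (tau x) - rd x * dphi (rd x))"
        using A5[of "rd x" "tau x"] dp \<open>rd x < tau x\<close> dfx mu0_pos by simp
      ultimately have "0 \<le> Y x * rd x" using Y_rd_identity[of x] by linarith
      then show ?thesis using dp by (simp add: zero_le_mult_iff)
    qed
  qed
qed

lemma regime_large:
  "0 < x \<Longrightarrow> x < 1 \<Longrightarrow> \<eta>1 < ratio x \<Longrightarrow> 0 < 1 * X x \<and> 1 * Y x \<le> 0"
  using X_pos_if_ratio_large Y_nonpos_if_ratio_large eta1 by force

lemma regime_small:
  "0 < x \<Longrightarrow> x < 1 \<Longrightarrow> ratio x < \<eta>0 \<Longrightarrow> 0 < -1 * X x \<and> -1 * Y x \<le> 0"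
  using X_neg_if_ratio_small Y_nonneg_if_ratio_small eta0 by force

text \<open>Once \<open>r'/\<tau>\<close> exceeds \<open>\<eta>\<^sub>1\<close> at \<open>\<rho>\<close>, it does so on all of \<open>(0, \<rho>]\<close>: at the last crossing \<open>z\<close>
  the comparison principle on \<open>(z, \<rho>)\<close> would give \<open>r'/\<tau>(\<rho>) < r'/\<tau>(z) \<le> \<eta>\<^sub>1\<close>.\<close>
lemma ratio_large_persists:
  assumes \<rho>: "0 < \<rho>" "\<rho> < 1" "\<eta>1 < ratio \<rho>" and x: "0 < x" "x \<le> \<rho>"
  shows "\<eta>1 < ratio x"
proof (rule ccontr)
  assume "\<not> ?thesis"
  moreover have "continuous_on {x..\<rho>} ratio" using x \<rho> by (intro continuous_on_subset[OF ratio_cont]) auto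
  ultimately obtain z where z: "x \<le> z" "z < \<rho>" "ratio z \<le> \<eta>1" "\<And>w. z < w \<Longrightarrow> w \<le> \<rho> \<Longrightarrow> \<eta>1 < ratio w"
    using last_crossing[of x \<rho> ratio \<eta>1] x \<rho> by auto
  have "1 * ratio \<rho> < 1 * ratio z"
    using z x \<rho> by (intro sigma_ratio_decreasing regime_large) auto
  then show False using z \<rho> by simp
qed

lemma ratio_small_persists:
  assumes \<rho>: "0 < \<rho>" "\<rho> < 1" "ratio \<rho> < \<eta>0" and x: "0 < x" "x \<le> \<rho>"
  shows "ratio x < \<eta>0"
proof (rule ccontr)
  assume "\<not> ?thesis"
  moreover have "continuous_on {x..\<rho>} (\<lambda>y. - ratio y)"
    using x \<rho> by (intro continuous_on_minus continuous_on_subset[OF ratio_cont]) auto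
  ultimately obtain z where z: "x \<le> z" "z < \<rho>" "\<eta>0 \<le> ratio z" "\<And>w. z < w \<Longrightarrow> w \<le> \<rho> \<Longrightarrow> ratio w < \<eta>0"
    using last_crossing[of x \<rho> "\<lambda>y. - ratio y" "- \<eta>0"] x \<rho> by auto
  have "-1 * ratio \<rho> < -1 * ratio z"
    using z x \<rho> by (intro sigma_ratio_decreasing regime_small) auto
  then show False using z \<rho> by simp
qed

text \<open>If \<open>r'/\<tau>(\<rho>) > \<eta>\<^sub>1\<close>, then \<open>r'\<close> is
  nonincreasing on \<open>(0, \<rho>]\<close>, so \<open>r(\<rho>) \<ge> \<rho> r'(\<rho>)\<close> as \<open>r(0\<^sup>+) = 0\<close>, and the bounds on \<open>f\<close> give
  \<open>r'/\<tau>(\<rho>) \<le> \<mu>\<^sub>1/\<mu>\<^sub>0 \<le> \<eta>\<^sub>1\<close>. The lower bound is symmetric.\<close>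
lemma ratio_upper_bound:
  assumes \<rho>: "0 < \<rho>" "\<rho> < 1" shows "ratio \<rho> \<le> \<eta>1"
proof (rule ccontr)
  assume "\<not> ?thesis"
  then have large: "\<eta>1 < ratio \<rho>" by simp
  have "1 * rd \<rho> \<le> 1 * rd a" if a: "0 < a" "a < \<rho>" for a
    using a \<rho> by (intro sigma_rd_antitone regime_large ratio_large_persists[OF \<rho> large]) auto
  then have "\<rho> * rd \<rho> \<le> r \<rho>"
    using \<rho> by (intro lower_bound_from_origin[OF r_lim, of \<rho> rd "rd \<rho>"] r_deriv continuous_on_subset[OF r_cont]) auto
  then have "\<mu>0 * (\<rho> * rd \<rho>) / (\<mu>1 * \<rho>) \<le> tau \<rho>"
    using tau_lower[of \<rho>] \<rho> mu0_pos mu1_pos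
    by (smt (verit) divide_right_mono mult_left_mono mult_pos_pos)
  then have "ratio \<rho> \<le> \<mu>1 / \<mu>0"
    using \<rho> mu0_pos mu1_pos tau_pos[of \<rho>] by (simp add: ratio_def field_simps)
  then show False using large eta1 by simp
qed

lemma ratio_lower_bound:
  assumes \<rho>: "0 < \<rho>" "\<rho> < 1" shows "\<eta>0 \<le> ratio \<rho>"
proof (rule ccontr)
  assume "\<not> ?thesis"
  then have small: "ratio \<rho> < \<eta>0" by simp
  have "-1 * rd \<rho> \<le> -1 * rd a" if a: "0 < a" "a < \<rho>" for a
    using a \<rho> by (intro sigma_rd_antitone regime_small ratio_small_persists[OF \<rho> small]) auto
  then have "r \<rho> \<le> \<rho> * rd \<rho>"
    using \<rho> by (intro upper_bound_from_origin[OF r_lim, of \<rho> rd "rd \<rho>"] r_deriv continuous_on_subset[OF r_cont]) auto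
  then have "tau \<rho> \<le> \<mu>1 * (\<rho> * rd \<rho>) / (\<mu>0 * \<rho>)"
    using tau_upper[of \<rho>] \<rho> mu0_pos mu1_pos
    by (smt (verit) divide_right_mono mult_left_mono mult_pos_pos)
  then have "\<mu>0 / \<mu>1 \<le> ratio \<rho>"
    using \<rho> mu0_pos mu1_pos tau_pos[of \<rho>] by (simp add: ratio_def field_simps)
  then show False using small eta0 by simp
qed

lemma log_derivative_bounds:
  assumes y: "0 < y" "y < 1"
  shows "(\<eta>0 * \<mu>0 / \<mu>1) * r y \<le> y * rd y \<and> y * rd y \<le> (\<eta>1 * \<mu>1 / \<mu>0) * r y"
proof
  have tp: "0 < tau y" using y by (intro tau_pos) auto
  have "\<eta>0 * (\<mu>0 * r y / (\<mu>1 * y)) \<le> \<eta>0 * tau y"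
    using tau_lower[of y] y eta0 by (intro mult_left_mono) auto
  also have "\<dots> \<le> rd y" using ratio_lower_bound[OF y] tp by (simp add: ratio_def le_divide_eq)
  finally show "(\<eta>0 * \<mu>0 / \<mu>1) * r y \<le> y * rd y" using y mu1_pos by (simp add: field_simps)
  have "rd y \<le> \<eta>1 * tau y" using ratio_upper_bound[OF y] tp by (simp add: ratio_def divide_le_eq)
  also have "\<dots> \<le> \<eta>1 * (\<mu>1 * r y / (\<mu>0 * y))"
    using tau_upper[of y] y eta1 mu0_pos mu1_pos by (intro mult_left_mono) (auto intro: order.trans[rotated])
  finally show "y * rd y \<le> (\<eta>1 * \<mu>1 / \<mu>0) * r y" using y mu0_pos by (simp add: field_simps)
qed

lemma power_bounds:
  assumes "0 < \<rho>" "\<rho> \<le> 1"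
  shows "lam * \<rho> powr (\<eta>1 * \<mu>1 / \<mu>0) \<le> r \<rho> \<and> r \<rho> \<le> lam * \<rho> powr (\<eta>0 * \<mu>0 / \<mu>1)"
proof -
  have "r 1 * \<rho> powr (\<eta>1 * \<mu>1 / \<mu>0) \<le> r \<rho> \<and> r \<rho> \<le> r 1 * \<rho> powr (\<eta>0 * \<mu>0 / \<mu>1)"
  proof (rule powr_bounds_from_log_derivative[OF assms])
    show "continuous_on {\<rho>..1} r" using assms by (intro continuous_on_subset[OF r_cont]) auto
  qed (use assms log_derivative_bounds in \<open>auto intro: r_pos r_deriv\<close>)
  then show ?thesis using r_one by simp
qed

end

lemma phi_growth_from_assumptions:
  fixes \<phi> dphi ddphi :: "real \<Rightarrow> real" and t0 :: real
  assumes phi_C2: "\<forall>v\<in>{0<..}. (\<phi> has_real_derivative dphi v) (at v) \<and> (dphi has_real_derivative ddphi v) (at v)"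
    and phi_convex: "convex_on {0<..} \<phi>"
    and A5: "mono_on {0<..} (\<lambda>v. v * dphi v)"
    and t0: "t0 \<ge> 0"
    and dphi_t0: "(t0 > 0 \<and> dphi t0 = 0) \<or> (t0 = 0 \<and> (dphi \<longlongrightarrow> 0) (at_right 0))"
    and q1_C1: "\<exists>dq1. (\<forall>s\<in>{1..}. (q1_fun dphi t0 has_real_derivative dq1 s) (at s within {1..}) \<and> dq1 s < 0)
                       \<and> continuous_on {1..} dq1"
    and q0_C1: "\<exists>dq0. (\<forall>s\<in>{0<..1}. (q0_fun dphi t0 has_real_derivative dq0 s) (at s within {0<..1}) \<and> dq0 s < 0)
                       \<and> continuous_on {0<..1} dq0"
    and q1_lim: "(q1_fun dphi t0 \<longlongrightarrow> 0) at_top"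
    and q0_lim: "filterlim (q0_fun dphi t0) at_top (at_right 0)"
  shows "phi_growth dphi t0"
proof -
  obtain dq0 where dq0: "\<forall>s\<in>{0<..1}. (q0_fun dphi t0 has_real_derivative dq0 s) (at s within {0<..1}) \<and> dq0 s < 0"
    using q0_C1 by blast
  obtain dq1 where dq1: "\<forall>s\<in>{1..}. (q1_fun dphi t0 has_real_derivative dq1 s) (at s within {1..}) \<and> dq1 s < 0"
    using q1_C1 by blast
  show ?thesis
  proof
    show "dphi p \<le> dphi q" if "0 < p" "p \<le> q" for p q
      using convex_deriv_mono[OF phi_convex, of dphi] phi_C2 that by auto
    show "p * dphi p \<le> q * dphi q" if "0 < p" "p \<le> q" for p q using A5 that by (auto intro: mono_onD)
    show "q0_fun dphi t0 b < q0_fun dphi t0 a" if "0 < a" "a < b" "b \<le> 1" for a b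
      by (rule neg_deriv_within_imp_decreasing[OF dq0]) (use that in auto)
    show "q1_fun dphi t0 b < q1_fun dphi t0 a" if "1 \<le> a" "a < b" for a b
      by (rule neg_deriv_within_imp_decreasing[OF dq1]) (use that in auto)
    show "continuous_on {0<..1} (q0_fun dphi t0)" using DERIV_continuous_on dq0 by blast
    show "continuous_on {1..} (q1_fun dphi t0)" using DERIV_continuous_on dq1 by blast
  qed (use t0 dphi_t0 q0_lim q1_lim in auto)
qed

lemma regular_solution_bounded_equilibrium:
  fixes n :: nat and f df dphi ddphi h dh ddh r :: "real \<Rightarrow> real" and t0 \<mu>0 \<mu>1 lam :: real
  assumes phi: "phi_growth dphi t0" and n2: "n \<ge> 2"
    and mu0_pos: "0 < \<mu>0" and mu01: "\<mu>0 \<le> \<mu>1"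
    and df_bounds: "\<forall>x\<in>{0..}. \<mu>0 \<le> df x \<and> df x \<le> \<mu>1"
    and f_bounds: "\<forall>x\<in>{0..}. \<mu>0 * x \<le> f x \<and> f x \<le> \<mu>1 * x"
    and f_deriv: "\<forall>x\<in>{0..}. (f has_real_derivative df x) (at x within {0..})"
    and phi_C2: "\<forall>v\<in>{0<..}. (\<phi> has_real_derivative dphi v) (at v) \<and> (dphi has_real_derivative ddphi v) (at v)"
    and h_C2: "\<forall>x\<in>{0<..}. (h has_real_derivative dh x) (at x) \<and> (dh has_real_derivative ddh x) (at x)"
    and h_strict_convex: "strict_convex_on {0<..} h"
    and reg: "regular_equilibrium_solution n f df dphi ddphi ddh lam r"
  obtains rd rdd where "bounded_equilibrium dphi t0 n f df ddphi dh ddh r rd rdd \<mu>0 \<mu>1 lam"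
proof -
  from reg obtain rd rdd where
    r_deriv: "\<forall>\<rho>\<in>{0<..1}. (r has_real_derivative rd \<rho>) (at \<rho> within {0<..1})" and
    rd_cont: "continuous_on {0<..1} rd" and
    rd_deriv: "\<forall>\<rho>\<in>{0<..<1}. (rd has_real_derivative rdd \<rho>) (at \<rho>)" and
    rd_pos: "\<forall>\<rho>\<in>{0<..1}. rd \<rho> > 0" and
    r_one: "r 1 = lam" and
    ode: "\<forall>\<rho>\<in>{0<..<1}.
           let \<tau> = tau_fun f r \<rho> in
           f \<rho> * (ddphi (rd \<rho>) + ddh (rd \<rho> * \<tau> ^ (n - 1)) * \<tau> ^ (2 * (n - 1))) * rdd \<rho>
           = real (n - 1) * (df (r \<rho>) * dphi \<tau> - df \<rho> * dphi (rd \<rho>))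
             - real (n - 1) * (df (r \<rho>) * rd \<rho> - df \<rho> * \<tau>)
               * ddh (rd \<rho> * \<tau> ^ (n - 1)) * rd \<rho> * \<tau> ^ (2 * n - 3)" and
    r_lim: "(r \<longlongrightarrow> 0) (at_right 0)"
    unfolding regular_equilibrium_solution_def equilibrium_solution_def by blast
  have dh_strict: "dh p < dh q" if "0 < p" "p < q" for p q
    using strict_convex_deriv_strict_mono[OF h_strict_convex, of dh] h_C2 that by auto
  have "bounded_equilibrium dphi t0 n f df ddphi dh ddh r rd rdd \<mu>0 \<mu>1 lam"
  proof (intro_locales)
    show "phi_growth dphi t0" by (rule phi)
    show "bounded_equilibrium_axioms dphi n f df ddphi dh ddh r rd rdd \<mu>0 \<mu>1 lam"
    proof
      show "(r has_real_derivative rd x) (at x)" if "0 < x" "x < 1" for x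
        using r_deriv that by (intro deriv_within_interior[of _ _ _ "{0<..1}"]) auto
      show "continuous_on {0<..1} r" using DERIV_continuous_on r_deriv by blast
      show "(f has_real_derivative df x) (at x)" if "0 < x" for x
        using f_deriv that by (intro deriv_within_interior[of _ _ _ "{0..}"]) auto
      show "0 \<le> ddphi v" if v: "0 < v" for v
        by (rule deriv_nonneg_if_mono[where F = dphi]) (use phi_growth.dphi_mono[OF phi] phi_C2 v in auto)
      show "0 \<le> ddh x" if x: "0 < x" for x
        by (rule deriv_nonneg_if_mono[where F = dh]) (use dh_strict h_C2 x in \<open>auto simp: le_less\<close>)
      show "f \<rho> * (ddphi (rd \<rho>) + ddh (rd \<rho> * tau_fun f r \<rho> ^ (n - 1)) * tau_fun f r \<rho> ^ (2 * (n - 1))) * rdd \<rho>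
           = real (n - 1) * (df (r \<rho>) * dphi (tau_fun f r \<rho>) - df \<rho> * dphi (rd \<rho>))
             - real (n - 1) * (df (r \<rho>) * rd \<rho> - df \<rho> * tau_fun f r \<rho>)
               * ddh (rd \<rho> * tau_fun f r \<rho> ^ (n - 1)) * rd \<rho> * tau_fun f r \<rho> ^ (2 * n - 3)"
        if "0 < \<rho>" "\<rho> < 1" for \<rho>
        using ode that by (simp add: Let_def)
      show "2 \<le> n" "0 < \<mu>0" "\<mu>0 \<le> \<mu>1" "(r \<longlongrightarrow> 0) (at_right 0)" "r 1 = lam"
        "continuous_on {0<..1} rd" by (fact n2 mu0_pos mu01 r_lim r_one rd_cont)+
      show "\<mu>0 \<le> df x \<and> df x \<le> \<mu>1" "\<mu>0 * x \<le> f x \<and> f x \<le> \<mu>1 * x" if "0 \<le> x" for x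
        using df_bounds f_bounds that by auto
      show "(rd has_real_derivative rdd x) (at x)" if "0 < x" "x < 1" for x
        using rd_deriv that by simp
      show "0 < rd x" if "0 < x" "x \<le> 1" for x using rd_pos that by simp
      show "(dphi has_real_derivative ddphi v) (at v)" if "0 < v" for v using phi_C2 that by simp
      show "(dh has_real_derivative ddh v) (at v)" if "0 < v" for v using h_C2 that by simp
      show "dh p < dh q" if "0 < p" "p < q" for p q using dh_strict that .
    qed
  qed
  then show ?thesis by (rule that)
qed

text \<open>The hypotheses on \<open>\<kappa>\<close> only serve (in the paper) to guarantee the bounds on \<open>f\<close>,
  which are assumed here directly; together with (A1), (A4)--(A6) they yield both locales.\<close>
theorem corollary4p4:
  fixes n :: nat
    and \<kappa> f df :: "real \<Rightarrow> real"
    and \<phi> dphi ddphi h dh ddh :: "real \<Rightarrow> real"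
    and t0 \<mu>0 \<mu>1 lam :: real
    and r :: "real \<Rightarrow> real"
  assumes n2: "n \<ge> 2"
    and kappa_cont: "continuous_on {0..} \<kappa>"
    and mu_plus: "(\<integral>\<^sup>+ s. ennreal (indicator {0..} s * (s * max (\<kappa> s) 0)) \<partial>lborel) \<le> 1"
    and mu_minus: "(\<integral>\<^sup>+ s. ennreal (indicator {0..} s * (s * max (- \<kappa> s) 0)) \<partial>lborel) < \<infinity>"
    and f_deriv: "\<forall>x\<in>{0..}. (f has_real_derivative df x) (at x within {0..})"
    and df_deriv: "\<forall>x\<in>{0..}. (df has_real_derivative (- \<kappa> x * f x)) (at x within {0..})"
    and f0: "f 0 = 0" and df0: "df 0 = 1"
    \<comment> \<open>(A1)\<close>
    and h_C2: "\<forall>x\<in>{0<..}. (h has_real_derivative dh x) (at x) \<and> (dh has_real_derivative ddh x) (at x)"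
    and ddh_cont: "continuous_on {0<..} ddh"
    and h_strict_convex: "strict_convex_on {0<..} h"
    \<comment> \<open>(A4)\<close>
    and phi_pos: "\<forall>v\<in>{0<..}. \<phi> v > 0"
    and phi_C2: "\<forall>v\<in>{0<..}. (\<phi> has_real_derivative dphi v) (at v) \<and> (dphi has_real_derivative ddphi v) (at v)"
    and ddphi_cont: "continuous_on {0<..} ddphi"
    and phi_convex: "convex_on {0<..} \<phi>"
    \<comment> \<open>(A5)\<close>
    and A5: "mono_on {0<..} (\<lambda>v. v * dphi v)"
    \<comment> \<open>(A6)\<close>
    and t0: "t0 \<ge> 0"
    and dphi_t0: "(t0 > 0 \<and> dphi t0 = 0) \<or> (t0 = 0 \<and> (dphi \<longlongrightarrow> 0) (at_right 0))"
    and q1_C1: "\<exists>dq1. (\<forall>s\<in>{1..}. (q1_fun dphi t0 has_real_derivative dq1 s) (at s within {1..}) \<and> dq1 s < 0)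
                       \<and> continuous_on {1..} dq1"
    and q0_C1: "\<exists>dq0. (\<forall>s\<in>{0<..1}. (q0_fun dphi t0 has_real_derivative dq0 s) (at s within {0<..1}) \<and> dq0 s < 0)
                       \<and> continuous_on {0<..1} dq0"
    and q1_lim: "(q1_fun dphi t0 \<longlongrightarrow> 0) at_top"
    and q0_lim: "filterlim (q0_fun dphi t0) at_top (at_right 0)"
    \<comment> \<open>bounds on f\<close>
    and mu0_pos: "0 < \<mu>0" and mu01: "\<mu>0 \<le> \<mu>1"
    and df_bounds: "\<forall>x\<in>{0..}. \<mu>0 \<le> df x \<and> df x \<le> \<mu>1"
    and f_bounds: "\<forall>x\<in>{0..}. \<mu>0 * x \<le> f x \<and> f x \<le> \<mu>1 * x"
    \<comment> \<open>the solution\<close>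
    and lam_pos: "lam > 0"
    and reg: "regular_equilibrium_solution n f df dphi ddphi ddh lam r"
  shows "let \<eta>0 = min (\<mu>0 / \<mu>1) (the_inv_into {0<..1} (q0_fun dphi t0) (\<mu>1 / \<mu>0));
             \<eta>1 = max (\<mu>1 / \<mu>0) (the_inv_into {1..} (q1_fun dphi t0) (\<mu>0 / \<mu>1));
             c0 = \<eta>0 * \<mu>0 / \<mu>1;
             c1 = \<eta>1 * \<mu>1 / \<mu>0
         in \<forall>\<rho>\<in>{0<..1}. lam * \<rho> powr c1 \<le> r \<rho> \<and> r \<rho> \<le> lam * \<rho> powr c0"
proof -
  have phi: "phi_growth dphi t0"
    using phi_growth_from_assumptions[OF phi_C2 phi_convex A5 t0 dphi_t0 q1_C1 q0_C1 q1_lim q0_lim] .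
  obtain rd rdd where E: "bounded_equilibrium dphi t0 n f df ddphi dh ddh r rd rdd \<mu>0 \<mu>1 lam"
    using regular_solution_bounded_equilibrium[OF phi n2 mu0_pos mu01 df_bounds f_bounds f_deriv
        phi_C2 h_C2 h_strict_convex reg] by blast
  show ?thesis
    using bounded_equilibrium.power_bounds[OF E]
    unfolding Let_def bounded_equilibrium.\<eta>0_def[OF E] bounded_equilibrium.\<eta>1_def[OF E] by auto
qed

end
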